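(* Let $k\ge1$, $\lambda>0$ and $\theta>1$. Then every solution $(x,y)$ with $x,y>0$ of $$x=\lambda\Bigl(\frac{1+x+\theta y}{1+x+y}\Bigr)^k,\qquad y=\lambda\Bigl(\frac{1+\theta x+y}{1+x+y}\Bigr)^k$$ satisfies $x=y$. *)

theory Defs
  imports Complex_Main
begin

end

theory Submission
  imports Defs
begin

text \<open>If \<open>x \<noteq> y\<close>, say \<open>x > y\<close>, then \<open>\<theta> > 1\<close> makes the numerator of the
  first fraction strictly smaller than that of the second (the denominators agree), so the
  right-hand side of the equation for \<open>x\<close> is strictly smaller than that for \<open>y\<close>, i.e.
  \<open>x < y\<close>: a contradiction.\<close>

lemma weighted_ratio_power_less:
  fixes k :: nat and lambda theta u v :: real
  assumes "k \<ge> 1" and "lambda > 0" and "theta > 1" and "0 \<le> v" and "v < u"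
  shows "lambda * ((1 + u + theta * v) / (1 + u + v)) ^ k
       < lambda * ((1 + theta * u + v) / (1 + u + v)) ^ k"
proof -
  have "(theta - 1) * v < (theta - 1) * u"
    using assms by simp
  then have "1 + u + theta * v < 1 + theta * u + v"
    by (simp add: algebra_simps)
  then have "(1 + u + theta * v) / (1 + u + v) < (1 + theta * u + v) / (1 + u + v)"
    using assms by (simp add: divide_strict_right_mono)
  moreover have "0 \<le> (1 + u + theta * v) / (1 + u + v)"
    using assms by simp
  ultimately show ?thesis
    using assms(1,2) by (simp add: power_strict_mono)
qed

theorem mainTheorem3:
  fixes k :: nat and lambda theta x y :: real
  assumes "k \<ge> 1" and "lambda > 0" and "theta > 1"
    and "x > 0" and "y > 0"
    and "x = lambda * ((1 + x + theta * y) / (1 + x + y)) ^ k"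
    and "y = lambda * ((1 + theta * x + y) / (1 + x + y)) ^ k"
  shows "x = y"
proof (cases x y rule: linorder_cases)
  case less
  have "lambda * ((1 + theta * x + y) / (1 + x + y)) ^ k
      < lambda * ((1 + x + theta * y) / (1 + x + y)) ^ k"
    using weighted_ratio_power_less[OF assms(1-3) less_imp_le[OF assms(4)] less]
    by (simp add: add_ac)
  with assms(6,7) less show ?thesis
    by linarith
next
  case greater
  from weighted_ratio_power_less[OF assms(1-3) less_imp_le[OF assms(5)] greater]
    assms(6,7) greater show ?thesis
    by linarith
qed

end
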